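(* Let $\Omega=\mathsf{tt}\Rightarrow\mathsf{tt}$. Then: (1) for every program term $A\in\mathcal L_a$, $A\preceq\Omega$; (2) $\mathsf{tt}\preceq\Omega$ (i.e. $\to_\Omega$ is reflexive in every $\mathcal L$-model); (3) $\Omega\Omega\preceq\Omega$ (i.e. $\to_\Omega$ is transitive). Consequently $\forall\Omega.(\cdot)$ is an S4 modality and $\to_{\Omega^*}=\to_\Omega$ in every $\mathcal L$-model.
   Context: Fix countable, nonempty, pairwise disjoint sets $\mathrm{AtF}$ (atomic formulas), $\mathrm{AtP}$ (atomic programs) and $I$ (agent names). The formulas $\mathcal L_s$ and programs $\mathcal L_a$ of Type PDL ($\tau$PDL) are generated by $\varphi::=p\mid\neg\varphi\mid\forall A.\varphi\mid \mathsf C_\imath A$ and $A::=a\mid\varphi\mid\varphi\Rightarrow\varphi\mid AA\mid A+A\mid A^*$ with $p\in\mathrm{AtF}$, $a\in\mathrm{AtP}$, $\imath\in I$ (a formula used as a program is a test; $AB$ is sequential composition, $A+B$ choice, $\forall A.\varphi$ is the box $[A]\varphi$). Other connectives are abbreviations, e.g. $\varphi\to\psi:=\forall\varphi.\psi$. $\mathsf{tt}$ is a fixed tautology, $\mathsf{ff}=\neg\mathsf{tt}$, $\Omega:=\mathsf{tt}\Rightarrow\mathsf{tt}$, $\mathrm{AtP}_\Omega=\mathrm{AtP}\cup\{\Omega\}$. $\Sigma$ is the set of programs of the forms $a$, $\varphi$, $\varphi\Rightarrow\psi$; $\tilde\Sigma$ the set of programs of the forms $a$, $\varphi\Rightarrow\psi$;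 $\Sigma^+$ the finite nonempty sequential compositions of elements of $\Sigma$. An $\mathcal L$-model $M$ consists of a nonempty set $W$, a relation $\to_a\subseteq W\times W$ for each $a\in\mathrm{AtP}$, a valuation $\rho:\mathrm{AtF}\to2^W$, and for each $\imath\in I$, $w\in W$ a set $\imath^M(w)\subseteq\bigcup\{\to_A:A\in\Sigma^+\}$. Interpretation: $[\![p]\!]=\rho(p)$, $[\![\neg\varphi]\!]=W\setminus[\![\varphi]\!]$, $[\![\forall A.\varphi]\!]=\{w:\forall w'(w\to_Aw'\Rightarrow w'\in[\![\varphi]\!])\}$; $\to_\varphi=\{(w,w):w\in[\![\varphi]\!]\}$, $\to_{AB}=\to_A\circ\to_B$ (first $A$ then $B$), $\to_{A+B}=\to_A\cup\to_B$, $\to_{A^*}=\bigcup_{n\ge0}(\to_A)^n$, $\to_{\varphi\Rightarrow\psi}=\bigcup\{\to_A: A\in\Sigma^+,\ \forall w\in[\![\varphi]\!]\,\forall w'(w\to_Aw'\Rightarrow w'\in[\![\psi]\!])\}$. Capabilities: $[\![\mathsf C_\imath a]\!]=\{w:\to_a\subseteq\imath^M(w)\}$, $[\![\mathsf C_\imath\varphi]\!]=W$, $[\![\mathsf C_\imath(\varphi\Rightarrow\psi)]\!]=\{w:\to_{\varphi\Rightarrow\psi}\subseteq\imath^M(w)\}$, $[\![\mathsf C_\imath(AB)]\!]=\{w\in[\![\mathsf C_\imath A]\!]:\forall w'(w\to_Aw'\Rightarrow w'\in[\![\mathsf C_\imath B]\!])\}$, $[\![\mathsf C_\imath(A+B)]\!]=[\![\mathsf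 C_\imath A]\!]\cap[\![\mathsf C_\imath B]\!]$, $[\![\mathsf C_\imath A^*]\!]=\bigcup\{[\![\varphi]\!]:[\![\varphi]\!]\subseteq[\![\mathsf C_\imath A]\!]\cap[\![\forall A.\varphi]\!]\}$. Normality condition: $\imath^M(w)=\bigcup\{\to_{\varphi\Rightarrow\psi}:w\in[\![\mathsf C_\imath(\varphi\Rightarrow\psi)]\!]\}\cup\bigcup\{\to_a:w\in[\![\mathsf C_\imath a]\!]\}$. We write $w\models^M\varphi$ iff $w\in[\![\varphi]\!]$; $\varphi$ is valid if true at every state of every $\mathcal L$-model; $\varphi\equiv\psi$ means $[\![\varphi]\!]=[\![\psi]\!]$ in every $\mathcal L$-model; $\vartheta\models\chi$ means every state of every model satisfying $\vartheta$ satisfies $\chi$. For programs, $A\preceq B$ means $\to_A\subseteq\to_B$ in every $\mathcal L$-model (for a sequence, $A_1A_2\cdots A_n\preceq B$ refers to the composed relation). *)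

theory Defs
  imports Main "HOL-Library.Countable"
begin

text \<open>Syntax of Type PDL. 'f = AtF, 'a = AtP, 'i = I.\<close>

datatype ('f, 'a, 'i) form =
    Atom 'f
  | Neg "('f, 'a, 'i) form"
  | Box "('f, 'a, 'i) prog" "('f, 'a, 'i) form"
  | Cap 'i "('f, 'a, 'i) prog"
and ('f, 'a, 'i) prog =
    AtP 'a
  | Test "('f, 'a, 'i) form"
  | Arrow "('f, 'a, 'i) form" "('f, 'a, 'i) form"
  | Seq "('f, 'a, 'i) prog" "('f, 'a, 'i) prog"
  | Choice "('f, 'a, 'i) prog" "('f, 'a, 'i) prog"
  | Star "('f, 'a, 'i) prog"

text \<open>Implication phi --> psi is the box [phi]psi; tt is the fixed tautology p0 --> p0.\<close>
definition imp :: "('f, 'a, 'i) form \<Rightarrow> ('f, 'a, 'i) form \<Rightarrow> ('f, 'a, 'i) form" where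
  "imp \<phi> \<psi> = Box (Test \<phi>) \<psi>"

definition tt :: "('f, 'a, 'i) form" where
  "tt = imp (Atom undefined) (Atom undefined)"

definition Omega :: "('f, 'a, 'i) prog" where
  "Omega = Arrow tt tt"

inductive sigma :: "('f, 'a, 'i) prog \<Rightarrow> bool" where
  "sigma (AtP a)"
| "sigma (Test \<phi>)"
| "sigma (Arrow \<phi> \<psi>)"

inductive sigma_plus :: "('f, 'a, 'i) prog \<Rightarrow> bool" where
  "sigma A \<Longrightarrow> sigma_plus A"
| "sigma_plus A \<Longrightarrow> sigma_plus B \<Longrightarrow> sigma_plus (Seq A B)"

text \<open>An L-model with state set UNIV :: 'w set, atomic relations acc, valuation val,
  agent capabilities ag, together with an interpretation (sem for formulas, rel for programs)
  satisfying all interpretation clauses and the normality condition.\<close>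
definition is_model ::
  "('a \<Rightarrow> 'w rel) \<Rightarrow> ('f \<Rightarrow> 'w set) \<Rightarrow> ('i \<Rightarrow> 'w \<Rightarrow> 'w rel)
   \<Rightarrow> (('f, 'a, 'i) form \<Rightarrow> 'w set) \<Rightarrow> (('f, 'a, 'i) prog \<Rightarrow> 'w rel) \<Rightarrow> bool" where
  "is_model acc val ag sem rel \<longleftrightarrow>
     (\<forall>i w. ag i w \<subseteq> \<Union>{rel A | A. sigma_plus A}) \<and>
     (\<forall>p. sem (Atom p) = val p) \<and>
     (\<forall>\<phi>. sem (Neg \<phi>) = - sem \<phi>) \<and>
     (\<forall>A \<phi>. sem (Box A \<phi>) = {w. \<forall>w'. (w, w') \<in> rel A \<longrightarrow> w' \<in> sem \<phi>}) \<and>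
     (\<forall>a. rel (AtP a) = acc a) \<and>
     (\<forall>\<phi>. rel (Test \<phi>) = {(w, w) | w. w \<in> sem \<phi>}) \<and>
     (\<forall>A B. rel (Seq A B) = rel A O rel B) \<and>
     (\<forall>A B. rel (Choice A B) = rel A \<union> rel B) \<and>
     (\<forall>A. rel (Star A) = (\<Union>n. rel A ^^ n)) \<and>
     (\<forall>\<phi> \<psi>. rel (Arrow \<phi> \<psi>) =
        \<Union>{rel A | A. sigma_plus A \<and>
              (\<forall>w \<in> sem \<phi>. \<forall>w'. (w, w') \<in> rel A \<longrightarrow> w' \<in> sem \<psi>)}) \<and>
     (\<forall>i a. sem (Cap i (AtP a)) = {w. acc a \<subseteq> ag i w}) \<and>
     (\<forall>i \<phi>. sem (Cap i (Test \<phi>)) = UNIV) \<and>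
     (\<forall>i \<phi> \<psi>. sem (Cap i (Arrow \<phi> \<psi>)) = {w. rel (Arrow \<phi> \<psi>) \<subseteq> ag i w}) \<and>
     (\<forall>i A B. sem (Cap i (Seq A B)) =
        {w \<in> sem (Cap i A). \<forall>w'. (w, w') \<in> rel A \<longrightarrow> w' \<in> sem (Cap i B)}) \<and>
     (\<forall>i A B. sem (Cap i (Choice A B)) = sem (Cap i A) \<inter> sem (Cap i B)) \<and>
     (\<forall>i A. sem (Cap i (Star A)) =
        \<Union>{sem \<phi> | \<phi>. sem \<phi> \<subseteq> sem (Cap i A) \<inter> sem (Box A \<phi>)}) \<and>
     (\<forall>i w. ag i w =
        \<Union>{rel (Arrow \<phi> \<psi>) | \<phi> \<psi>. w \<in> sem (Cap i (Arrow \<phi> \<psi>))} \<union>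
        \<Union>{acc a | a. w \<in> sem (Cap i (AtP a))})"

end

theory Submission
  imports Defs
begin

text \<open>Since \<open>tt\<close> holds everywhere, the condition in the clause for \<open>tt \<Rightarrow> tt\<close> is vacuous,
  so \<open>\<rightarrow>\<^sub>\<Omega>\<close> is the union of the relations of all programs in \<open>\<Sigma>\<^sup>+\<close>. This family contains
  the test \<open>tt\<close> (the identity) and is closed under sequential composition, so \<open>\<rightarrow>\<^sub>\<Omega>\<close> is a
  preorder; a structural induction then shows that it contains the relation of every
  program. Reflexivity and transitivity give the S4 axioms T and 4 for the box of
  \<open>\<Omega>\<close>, and a preorder is its own reflexive transitive closure, so \<open>\<Omega>\<^sup>*\<close> and \<open>\<Omega>\<close> denote
  the same relation.\<close>

lemma rtrancl_subset_preorder: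
  assumes "r \<subseteq> s" and "refl s" and "trans s"
  shows "r\<^sup>* \<subseteq> s"
proof (rule subrelI)
  fix x y assume "(x, y) \<in> r\<^sup>*"
  then show "(x, y) \<in> s"
    using assms by (induction rule: rtrancl_induct) (auto dest: refl_onD transD)
qed

locale L_model =
  fixes acc :: "'a \<Rightarrow> 'w rel"
    and val :: "'f \<Rightarrow> 'w set"
    and ag :: "'i \<Rightarrow> 'w \<Rightarrow> 'w rel"
    and sem :: "('f, 'a, 'i) form \<Rightarrow> 'w set"
    and rel :: "('f, 'a, 'i) prog \<Rightarrow> 'w rel"
  assumes model: "is_model acc val ag sem rel"
begin

lemma sem_Box: "sem (Box A \<phi>) = {w. \<forall>w'. (w, w') \<in> rel A \<longrightarrow> w' \<in> sem \<phi>}"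
  and rel_Test: "rel (Test \<phi>) = {(w, w) | w. w \<in> sem \<phi>}"
  and rel_Seq: "rel (Seq A B) = rel A O rel B"
  and rel_Choice: "rel (Choice A B) = rel A \<union> rel B"
  and rel_Arrow: "rel (Arrow \<phi> \<psi>) = \<Union>{rel C | C. sigma_plus C \<and>
              (\<forall>w \<in> sem \<phi>. \<forall>w'. (w, w') \<in> rel C \<longrightarrow> w' \<in> sem \<psi>)}"
  using model unfolding is_model_def by auto

lemma rel_Star: "rel (Star A) = (rel A)\<^sup>*"
  using model unfolding is_model_def rtrancl_is_UN_relpow by auto

lemma sem_tt: "sem tt = UNIV"
  by (auto simp: tt_def imp_def sem_Box rel_Test)

lemma rel_Omega: "rel Omega = \<Union>{rel A | A. sigma_plus A}"
  by (auto simp: Omega_def rel_Arrow sem_tt)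

lemma sigma_plus_rel_subset_rel_Omega: "sigma_plus A \<Longrightarrow> rel A \<subseteq> rel Omega"
  unfolding rel_Omega by blast

lemma Id_subset_rel_Omega: "Id \<subseteq> rel Omega"
proof -
  have "rel (Test tt) = Id"
    by (auto simp: rel_Test sem_tt)
  moreover have "sigma_plus (Test tt)"
    by (intro sigma_plus.intros sigma.intros)
  ultimately show ?thesis
    using sigma_plus_rel_subset_rel_Omega by metis
qed

lemma refl_rel_Omega: "refl (rel Omega)"
  using Id_subset_rel_Omega by (auto simp: refl_on_def)

lemma trans_rel_Omega: "trans (rel Omega)"
proof (rule transI)
  fix x y z assume "(x, y) \<in> rel Omega" and "(y, z) \<in> rel Omega"
  then obtain A B where "sigma_plus A" "(x, y) \<in> rel A" "sigma_plus B" "(y, z) \<in> rel B"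
    unfolding rel_Omega by blast
  then have "sigma_plus (Seq A B)" and "(x, z) \<in> rel (Seq A B)"
    by (auto simp: rel_Seq intro: sigma_plus.intros)
  then show "(x, z) \<in> rel Omega"
    using sigma_plus_rel_subset_rel_Omega by blast
qed

lemma rel_subset_rel_Omega: "rel A \<subseteq> rel Omega"
proof (induction A rule: prog.induct[of "\<lambda>_. True"])
  case (AtP a)
  show ?case
    by (rule sigma_plus_rel_subset_rel_Omega) (intro sigma_plus.intros sigma.intros)
next
  case (Test \<phi>)
  show ?case
    using Id_subset_rel_Omega by (auto simp: rel_Test)
next
  case (Arrow \<phi> \<psi>)
  show ?case
    by (rule sigma_plus_rel_subset_rel_Omega) (intro sigma_plus.intros sigma.intros)
next
  case (Seq A B)
  then show ?case
    using trans_rel_Omega by (auto simp: rel_Seq dest: transD)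
next
  case (Choice A B)
  then show ?case
    by (simp add: rel_Choice)
next
  case (Star A)
  then show ?case
    using refl_rel_Omega trans_rel_Omega by (simp add: rel_Star rtrancl_subset_preorder)
qed simp_all

lemma rel_Star_Omega: "rel (Star Omega) = rel Omega"
  using rel_subset_rel_Omega[of "Star Omega"] by (auto simp: rel_Star)

end

theorem mainTheorem1:
  fixes acc :: "'a::countable \<Rightarrow> 'w rel"
    and val :: "'f::countable \<Rightarrow> 'w set"
    and ag :: "'i::countable \<Rightarrow> 'w \<Rightarrow> 'w rel"
    and sem :: "('f, 'a, 'i) form \<Rightarrow> 'w set"
    and rel :: "('f, 'a, 'i) prog \<Rightarrow> 'w rel"
  assumes "is_model acc val ag sem rel"
  shows "(\<forall>A. rel A \<subseteq> rel Omega)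
       \<and> rel (Test tt) \<subseteq> rel Omega
       \<and> rel (Seq Omega Omega) \<subseteq> rel Omega
       \<and> refl (rel Omega) \<and> trans (rel Omega)
       \<and> (\<forall>\<phi> \<psi>. sem (Box Omega (imp \<phi> \<psi>)) \<subseteq> sem (imp (Box Omega \<phi>) (Box Omega \<psi>)))
       \<and> (\<forall>\<phi>. sem \<phi> = UNIV \<longrightarrow> sem (Box Omega \<phi>) = UNIV)
       \<and> (\<forall>\<phi>. sem (Box Omega \<phi>) \<subseteq> sem \<phi>)
       \<and> (\<forall>\<phi>. sem (Box Omega \<phi>) \<subseteq> sem (Box Omega (Box Omega \<phi>)))
       \<and> rel (Star Omega) = rel Omega"
proof -
  interpret L_model acc val ag sem rel
    using assms by unfold_locales
  have K: "sem (Box Omega (imp \<phi> \<psi>)) \<subseteq> sem (imp (Box Omega \<phi>) (Box Omega \<psi>))" for \<phi> \<psi>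
    by (auto simp: imp_def sem_Box rel_Test)
  have T: "sem (Box Omega \<phi>) \<subseteq> sem \<phi>" for \<phi>
    using refl_rel_Omega by (auto simp: sem_Box dest: refl_onD)
  have Four: "sem (Box Omega \<phi>) \<subseteq> sem (Box Omega (Box Omega \<phi>))" for \<phi>
    using trans_rel_Omega by (auto simp: sem_Box dest: transD)
  show ?thesis
    using rel_subset_rel_Omega refl_rel_Omega trans_rel_Omega rel_Star_Omega K T Four
    by (auto simp: sem_Box)
qed

end
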